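(* Let $k \ge 2$ be an integer. Let $V_0 = \{0\}$, $V_n = \{1,\dots,k\}^n$ for $n \in \mathbb{N}$, and $V = \bigcup_{n \ge 0} V_n$. Define $\pi \colon V \to V \cup \{-1\}$ by $\pi(0) = -1$, $\pi(v) = 0$ for $v \in V_1$, and $\pi(v_1,\dots,v_n) = (v_1,\dots,v_{n-1})$ for $n \ge 2$. Let $G_k$ be the graph with vertex set $V$ whose edges are the pairs $\{v,v'\} \subset V$ with $\pi(v) = v'$ or $\pi(v') = v$ (the infinite rooted $k$-ary tree). Then $\chi_{\star,1}(G_k) = 2$ and $\chi_{\star,2}(G_k) = k+1$.
   Context: Let $G$ be a graph with vertex set $V$, with the graph (shortest path) distance, and let $n, m \in \mathbb{N}$. A function $f \colon V \to \{1,\dots,n\}$ is an $m$-distance clustered $n$-coloring of $G$ if there is a constant $K_\star > 0$ such that for every $i$, every connected component of the subgraph induced by $f^{-1}[\{i\}]$ has at most $K_\star$ vertices, and the distance in $G$ between any two distinct such components (of the same color $i$) is bigger than $m$. The $m$-distance clustered chromatic number $\chi_{\star,m}(G)$ is the least $n \in \mathbb{N}$ for which an $m$-distance clustered $n$-coloring of $G$ exists, and $\infty$ if none exists. *)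

theory Defs
  imports Main "HOL-Library.Extended_Nat"
begin

text \<open>A graph is given by a vertex set V and a symmetric adjacency relation E.\<close>

definition is_walk :: "'a set \<Rightarrow> ('a \<Rightarrow> 'a \<Rightarrow> bool) \<Rightarrow> 'a list \<Rightarrow> bool" where
  "is_walk V E p \<longleftrightarrow> p \<noteq> [] \<and> set p \<subseteq> V \<and> (\<forall>i. Suc i < length p \<longrightarrow> E (p ! i) (p ! Suc i))"

text \<open>Shortest path distance in the graph (infinite if no path exists).\<close>
definition gdist :: "'a set \<Rightarrow> ('a \<Rightarrow> 'a \<Rightarrow> bool) \<Rightarrow> 'a \<Rightarrow> 'a \<Rightarrow> enat" where
  "gdist V E u v = (INF p \<in> {p. is_walk V E p \<and> hd p = u \<and> last p = v}. enat (length p - 1))"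

definition induced_component :: "'a set \<Rightarrow> ('a \<Rightarrow> 'a \<Rightarrow> bool) \<Rightarrow> 'a \<Rightarrow> 'a set" where
  "induced_component S E u = {v. \<exists>p. is_walk S E p \<and> hd p = u \<and> last p = v}"

definition dist_clustered_coloring ::
  "'a set \<Rightarrow> ('a \<Rightarrow> 'a \<Rightarrow> bool) \<Rightarrow> nat \<Rightarrow> nat \<Rightarrow> ('a \<Rightarrow> nat) \<Rightarrow> bool" where
  "dist_clustered_coloring V E m n f \<longleftrightarrow>
     (\<forall>v\<in>V. f v \<in> {1..n}) \<and>
     (\<exists>K::nat. K > 0 \<and>
       (\<forall>i\<in>{1..n}. \<forall>u\<in>{x\<in>V. f x = i}.
          finite (induced_component {x\<in>V. f x = i} E u) \<and>
          card (induced_component {x\<in>V. f x = i} E u) \<le> K)) \<and>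
     (\<forall>i\<in>{1..n}. \<forall>u\<in>{x\<in>V. f x = i}. \<forall>u'\<in>{x\<in>V. f x = i}.
        induced_component {x\<in>V. f x = i} E u \<noteq> induced_component {x\<in>V. f x = i} E u' \<longrightarrow>
        (\<forall>a\<in>induced_component {x\<in>V. f x = i} E u.
          \<forall>b\<in>induced_component {x\<in>V. f x = i} E u'. gdist V E a b > enat m))"

definition dist_clustered_chromatic :: "'a set \<Rightarrow> ('a \<Rightarrow> 'a \<Rightarrow> bool) \<Rightarrow> nat \<Rightarrow> enat" where
  "dist_clustered_chromatic V E m =
     (if \<exists>n f. dist_clustered_coloring V E m n f
      then enat (LEAST n. \<exists>f. dist_clustered_coloring V E m n f) else \<infinity>)"

text \<open>The infinite rooted k-ary tree: vertices are finite sequences over {1..k};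
  the root (0 in the paper) is the empty list; parent of xs@[i] is xs.\<close>
definition tree_V :: "nat \<Rightarrow> nat list set" where
  "tree_V k = {xs. set xs \<subseteq> {1..k}}"

definition tree_E :: "nat \<Rightarrow> nat list \<Rightarrow> nat list \<Rightarrow> bool" where
  "tree_E k v w \<longleftrightarrow> (\<exists>i\<in>{1..k}. w = v @ [i] \<or> v = w @ [i])"

end

theory Submission
  imports Defs
begin

(* Monochromatic components are finite, so some vertex v has no child of its own
   color: otherwise following same-colored children from the root yields an infinite component.
   For m = 1 this already forces two colors. For m = 2, two children of v with a common color are
   at distance 2 (through v), hence in one monochromatic component; but a color class avoiding v
   cannot leave the subtree of a child of v. So the k children of v carry k distinct colors, all
   different from the color of v.

   For m = 1 color by the parity of the depth. For m = 2 give (x_1, ..., x_n) the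
   color x_n + x_(n-2) + x_(n-4) + ... mod (k + 1): the children of v then receive every color
   except that of the parent of v. Hence two distinct vertices at distance 2 never share a color,
   and every monochromatic component has at most two vertices. *)

definition induced_adj :: "'a set \<Rightarrow> ('a \<Rightarrow> 'a \<Rightarrow> bool) \<Rightarrow> 'a \<Rightarrow> 'a \<Rightarrow> bool" where
  "induced_adj S E x y \<longleftrightarrow> E x y \<and> x \<in> S \<and> y \<in> S"

lemma is_walk_Cons_Cons [simp]:
  "is_walk S E (x # y # p) \<longleftrightarrow> x \<in> S \<and> E x y \<and> is_walk S E (y # p)"
proof
  assume h: "is_walk S E (x # y # p)"
  then have "x \<in> S" "E x y" by (auto simp: is_walk_def dest: spec[of _ 0])
  moreover have "is_walk S E (y # p)"
    unfolding is_walk_def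
  proof (intro conjI allI impI)
    fix i assume "Suc i < length (y # p)"
    then show "E ((y # p) ! i) ((y # p) ! Suc i)"
      using h by (auto simp: is_walk_def dest: spec[of _ "Suc i"])
  qed (use h in \<open>auto simp: is_walk_def\<close>)
  ultimately show "x \<in> S \<and> E x y \<and> is_walk S E (y # p)" by blast
next
  assume h: "x \<in> S \<and> E x y \<and> is_walk S E (y # p)"
  show "is_walk S E (x # y # p)"
    unfolding is_walk_def
  proof (intro conjI allI impI)
    fix i assume "Suc i < length (x # y # p)"
    with h show "E ((x # y # p) ! i) ((x # y # p) ! Suc i)"
      by (cases i) (auto simp: is_walk_def)
  qed (use h in \<open>auto simp: is_walk_def\<close>)
qed

lemma is_walk_singleton [simp]: "is_walk S E [x] \<longleftrightarrow> x \<in> S"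
  by (auto simp: is_walk_def)

lemma is_walk_imp_rtranclp: "is_walk S E p \<Longrightarrow> (induced_adj S E)\<^sup>*\<^sup>* (hd p) (last p)"
proof (induction p rule: induct_list012)
  case (3 x y p)
  then have "induced_adj S E x y" by (auto simp: induced_adj_def is_walk_def)
  with 3 show ?case by (auto intro: converse_rtranclp_into_rtranclp)
qed (auto simp: is_walk_def)

lemma rtranclp_imp_is_walk:
  assumes "(induced_adj S E)\<^sup>*\<^sup>* x y" "x \<in> S"
  shows "\<exists>p. is_walk S E p \<and> hd p = x \<and> last p = y"
  using assms
proof (induction rule: converse_rtranclp_induct)
  case base
  then show ?case by (intro exI[of _ "[y]"]) simp
next
  case (step x z)
  then obtain q where q: "is_walk S E q" "hd q = z" "last q = y"
    by (auto simp: induced_adj_def)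
  then obtain q' where "q = z # q'" by (cases q) (auto simp: is_walk_def)
  with q step.hyps(1) show ?case
    by (intro exI[of _ "x # q"]) (auto simp: induced_adj_def)
qed

lemma induced_component_eq:
  "induced_component S E u = {v. u \<in> S \<and> (induced_adj S E)\<^sup>*\<^sup>* u v}"
proof (intro set_eqI iffI)
  fix v assume "v \<in> induced_component S E u"
  then obtain p where p: "is_walk S E p" "hd p = u" "last p = v"
    by (auto simp: induced_component_def)
  then have "u \<in> S" by (cases p) (auto simp: is_walk_def)
  with p show "v \<in> {v. u \<in> S \<and> (induced_adj S E)\<^sup>*\<^sup>* u v}"
    using is_walk_imp_rtranclp by fastforce
qed (auto simp: induced_component_def dest: rtranclp_imp_is_walk)

lemma induced_component_subset: "induced_component S E u \<subseteq> S"
proof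
  fix v assume "v \<in> induced_component S E u"
  then have "(induced_adj S E)\<^sup>*\<^sup>* u v" "u \<in> S" by (auto simp: induced_component_eq)
  then show "v \<in> S" by (induction rule: rtranclp_induct) (auto simp: induced_adj_def)
qed

lemma induced_component_self: "u \<in> S \<Longrightarrow> u \<in> induced_component S E u"
  by (simp add: induced_component_eq)

lemma induced_component_eqI:
  assumes sym: "symp E" and a: "a \<in> induced_component S E u"
  shows "induced_component S E a = induced_component S E u"
proof -
  have "symp (induced_adj S E)" using sym by (auto simp: symp_def induced_adj_def)
  then have symp: "symp (induced_adj S E)\<^sup>*\<^sup>*" by (rule symp_rtranclp)
  have "a \<in> S" using a induced_component_subset by (rule subsetD[rotated])
  moreover have u: "u \<in> S" and ua: "(induced_adj S E)\<^sup>*\<^sup>* u a"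
    using a by (simp_all add: induced_component_eq)
  moreover have au: "(induced_adj S E)\<^sup>*\<^sup>* a u" using sympD[OF symp ua] .
  ultimately show ?thesis
    unfolding induced_component_eq
  proof (intro set_eqI iffI; clarify)
    fix v assume "(induced_adj S E)\<^sup>*\<^sup>* a v"
    then show "(induced_adj S E)\<^sup>*\<^sup>* u v" using ua by (rule rtranclp_trans[rotated])
  next
    fix v assume "(induced_adj S E)\<^sup>*\<^sup>* u v"
    then show "(induced_adj S E)\<^sup>*\<^sup>* a v" using au by (rule rtranclp_trans[rotated])
  qed
qed

lemma induced_component_adjacent_eq:
  assumes sym: "symp E"
    and a: "a \<in> induced_component S E u" and b: "b \<in> induced_component S E u'"
    and ab: "a = b \<or> E a b"
  shows "induced_component S E u = induced_component S E u'"
proof -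
  have "a \<in> S" using a induced_component_subset by (rule subsetD[rotated])
  moreover have "b \<in> S" using b induced_component_subset by (rule subsetD[rotated])
  ultimately have "b \<in> induced_component S E a"
    using ab by (auto simp: induced_component_eq induced_adj_def)
  with sym have "induced_component S E b = induced_component S E a"
    by (rule induced_component_eqI)
  moreover have "induced_component S E a = induced_component S E u"
    using sym a by (rule induced_component_eqI)
  moreover have "induced_component S E b = induced_component S E u'"
    using sym b by (rule induced_component_eqI)
  ultimately show ?thesis by simp
qed

lemma induced_component_finite_card_le_2:
  assumes sym: "symp E"
    and no_path: "\<And>x y z. x \<in> S \<Longrightarrow> y \<in> S \<Longrightarrow> z \<in> S \<Longrightarrow> E x y \<Longrightarrow> E x z \<Longrightarrow> y = z"
  shows "finite (induced_component S E u) \<and> card (induced_component S E u) \<le> 2"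
proof -
  define N where "N = {w. induced_adj S E u w}"
  have N_unique: "w = w'" if "w \<in> N" "w' \<in> N" for w w'
    using that no_path by (auto simp: N_def induced_adj_def)
  have "induced_component S E u \<subseteq> insert u N"
  proof
    fix v assume "v \<in> induced_component S E u"
    then have "(induced_adj S E)\<^sup>*\<^sup>* u v" by (simp add: induced_component_eq)
    then show "v \<in> insert u N"
    proof (induction rule: rtranclp_induct)
      case (step y z)
      then have y: "y \<in> S" and z: "z \<in> S" and yz: "E y z" by (auto simp: induced_adj_def)
      from step.IH show ?case
      proof
        assume "y = u"
        with y z yz show ?thesis by (simp add: N_def induced_adj_def)
      next
        assume "y \<in> N"
        then have u: "u \<in> S" and yu: "E y u" using sym by (auto simp: N_def induced_adj_def dest: sympD)
        from no_path[OF y u z yu yz] have "u = z" .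
        then show ?thesis by simp
      qed
    qed simp
  qed
  moreover have "finite (insert u N) \<and> card (insert u N) \<le> 2"
  proof (cases "N = {}")
    case False
    then obtain w where "w \<in> N" by blast
    with N_unique have "N = {w}" by blast
    then show ?thesis by (simp add: card_insert_le_m1)
  qed simp
  ultimately show ?thesis using card_mono[of "insert u N"] finite_subset[of _ "insert u N"] by (meson order_trans)
qed

lemma gdist_le_enat_iff:
  "gdist V E a b \<le> enat m \<longleftrightarrow> (\<exists>p. is_walk V E p \<and> hd p = a \<and> last p = b \<and> length p \<le> Suc m)"
proof -
  have "gdist V E a b \<le> enat m \<longleftrightarrow> gdist V E a b < enat (Suc m)"
    by (cases "gdist V E a b") auto
  also have "\<dots> \<longleftrightarrow> (\<exists>p. is_walk V E p \<and> hd p = a \<and> last p = b \<and> length p - 1 < Suc m)"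
    by (auto simp: gdist_def INF_less_iff)
  also have "\<dots> \<longleftrightarrow> (\<exists>p. is_walk V E p \<and> hd p = a \<and> last p = b \<and> length p \<le> Suc m)"
    by (intro ex_cong1) (auto simp: is_walk_def)
  finally show ?thesis .
qed

lemma gdist_le_1D: "gdist V E a b \<le> enat 1 \<Longrightarrow> a = b \<or> E a b"
  by (auto simp: gdist_le_enat_iff le_Suc_eq length_Suc_conv is_walk_def)

lemma gdist_le_2D:
  "gdist V E a b \<le> enat 2 \<Longrightarrow> a = b \<or> E a b \<or> (\<exists>x\<in>V. E a x \<and> E x b)"
proof -
  assume "gdist V E a b \<le> enat 2"
  then obtain p where p: "is_walk V E p" "hd p = a" "last p = b" "length p \<le> 3"
    by (auto simp: gdist_le_enat_iff numeral_3_eq_3 numeral_2_eq_2)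
  then consider x where "p = [x]" | x y where "p = [x, y]" | x y z where "p = [x, y, z]"
    by (cases p; cases "tl p"; cases "tl (tl p)") (auto simp: is_walk_def)
  then show ?thesis using p by cases auto
qed

lemma dist_clustered_coloringI:
  assumes sym: "symp E"
    and range: "\<forall>v\<in>V. f v \<in> {1..n}"
    and no_path: "\<And>x y z. x \<in> V \<Longrightarrow> y \<in> V \<Longrightarrow> z \<in> V \<Longrightarrow> E x y \<Longrightarrow> E x z \<Longrightarrow>
      f y = f x \<Longrightarrow> f z = f x \<Longrightarrow> y = z"
    and close: "\<And>a b. a \<in> V \<Longrightarrow> b \<in> V \<Longrightarrow> f a = f b \<Longrightarrow> gdist V E a b \<le> enat m \<Longrightarrow>
      a = b \<or> E a b"
  shows "dist_clustered_coloring V E m n f"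
  unfolding dist_clustered_coloring_def
proof (intro conjI range exI[of _ 2] ballI impI)
  fix i u
  let ?S = "{x \<in> V. f x = i}"
  have "y = z" if "x \<in> ?S" "y \<in> ?S" "z \<in> ?S" "E x y" "E x z" for x y z
    using that no_path[of x y z] by simp
  then show "finite (induced_component ?S E u)" and "card (induced_component ?S E u) \<le> 2"
    using induced_component_finite_card_le_2[OF sym] by blast+
next
  fix i u u' a b
  let ?S = "{x \<in> V. f x = i}"
  assume ne: "induced_component ?S E u \<noteq> induced_component ?S E u'"
    and a: "a \<in> induced_component ?S E u" and b: "b \<in> induced_component ?S E u'"
  have "a \<in> ?S" using a induced_component_subset by (rule subsetD[rotated])
  moreover have "b \<in> ?S" using b induced_component_subset by (rule subsetD[rotated])
  ultimately have "gdist V E a b \<le> enat m \<Longrightarrow> a = b \<or> E a b" using close by simp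
  moreover have "\<not> (a = b \<or> E a b)" using induced_component_adjacent_eq[OF sym a b] ne by blast
  ultimately show "enat m < gdist V E a b" by (meson not_le)
qed simp

lemma dist_clustered_coloring_finite_component:
  assumes "dist_clustered_coloring V E m n f" "u \<in> V"
  shows "finite (induced_component {x \<in> V. f x = f u} E u)"
  using assms unfolding dist_clustered_coloring_def by fastforce

lemma dist_clustered_coloring_same_component:
  assumes dcc: "dist_clustered_coloring V E m n f"
    and "a \<in> V" "b \<in> V" "f a = f b" and close: "gdist V E a b \<le> enat m"
  shows "b \<in> induced_component {x \<in> V. f x = f a} E a"
proof (rule ccontr)
  let ?S = "{x \<in> V. f x = f a}"
  assume b_notin: "b \<notin> induced_component ?S E a"
  have a: "a \<in> induced_component ?S E a" and b: "b \<in> induced_component ?S E b"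
    using assms(2-4) by (auto intro: induced_component_self)
  with b_notin have "induced_component ?S E a \<noteq> induced_component ?S E b" by blast
  moreover have "f a \<in> {1..n}" using dcc \<open>a \<in> V\<close> by (simp add: dist_clustered_coloring_def)
  ultimately have "enat m < gdist V E a b"
    using dcc a b assms(2-4) unfolding dist_clustered_coloring_def by fastforce
  with close show False by simp
qed

lemma dist_clustered_chromatic_eqI:
  assumes "dist_clustered_coloring V E m N f"
    and "\<And>n f. dist_clustered_coloring V E m n f \<Longrightarrow> N \<le> n"
  shows "dist_clustered_chromatic V E m = enat N"
proof -
  have "(LEAST n. \<exists>f. dist_clustered_coloring V E m n f) = N"
    by (rule Least_equality) (use assms in blast)+
  then show ?thesis using assms(1) unfolding dist_clustered_chromatic_def by auto
qed

lemma symp_tree_E: "symp (tree_E k)"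
  by (auto simp: symp_def tree_E_def)

lemma tree_V_Nil [simp]: "[] \<in> tree_V k"
  by (simp add: tree_V_def)

lemma tree_V_snoc [simp]: "v @ [i] \<in> tree_V k \<longleftrightarrow> v \<in> tree_V k \<and> i \<in> {1..k}"
  by (auto simp: tree_V_def)

lemma infinite_induced_component_tree_root:
  assumes "\<forall>v\<in>tree_V k. \<exists>i\<in>{1..k}. f (v @ [i]) = f v"
  shows "infinite (induced_component {x \<in> tree_V k. f x = f []} (tree_E k) [])"
proof
  let ?S = "{x \<in> tree_V k. f x = f []}"
  let ?C = "induced_component ?S (tree_E k) []"
  have lengths: "\<exists>v\<in>?C. length v = n" for n
  proof (induction n)
    case 0
    show ?case by (intro bexI[of _ "[]"] induced_component_self) simp_all
  next
    case (Suc n)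
    then obtain v where v: "v \<in> ?C" "length v = n" by blast
    have "v \<in> ?S" using v(1) induced_component_subset by (rule subsetD[rotated])
    with assms obtain i where "i \<in> {1..k}" "f (v @ [i]) = f v" by blast
    with \<open>v \<in> ?S\<close> have "induced_adj ?S (tree_E k) v (v @ [i])"
      by (auto simp: induced_adj_def tree_E_def)
    with v(1) have "v @ [i] \<in> ?C" by (auto simp: induced_component_eq)
    with v(2) show ?case by (intro bexI[of _ "v @ [i]"]) simp_all
  qed
  have "UNIV \<subseteq> length ` ?C"
  proof
    fix n
    from lengths[of n] show "n \<in> length ` ?C" by (auto intro: image_eqI)
  qed
  moreover assume "finite ?C"
  ultimately show False by (meson finite_imageI finite_subset infinite_UNIV_nat)
qed

lemma induced_component_tree_subtree:
  assumes "v \<notin> S" and "w \<in> induced_component S (tree_E k) (v @ [i])"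
  shows "\<exists>t. w = v @ i # t"
proof -
  from assms(2) have "(induced_adj S (tree_E k))\<^sup>*\<^sup>* (v @ [i]) w"
    by (simp add: induced_component_eq)
  then show ?thesis
  proof (induction rule: rtranclp_induct)
    case (step y z)
    then obtain t where t: "y = v @ i # t" by blast
    from step.hyps(2) have "z \<in> S" and "tree_E k y z" by (auto simp: induced_adj_def)
    then obtain j where "z = y @ [j] \<or> y = z @ [j]" by (auto simp: tree_E_def)
    then show ?case
    proof
      assume "y = z @ [j]"
      with t \<open>z \<in> S\<close> \<open>v \<notin> S\<close> show ?thesis
        by (cases t rule: rev_cases) auto
    qed (use t in auto)
  qed simp
qed

lemma tree_dist_clustered_coloring_color_change:
  assumes "dist_clustered_coloring (tree_V k) (tree_E k) m n f"
  shows "\<exists>v\<in>tree_V k. \<forall>i\<in>{1..k}. f (v @ [i]) \<noteq> f v"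
proof (rule ccontr)
  assume "\<not> ?thesis"
  then have "\<forall>v\<in>tree_V k. \<exists>i\<in>{1..k}. f (v @ [i]) = f v" by blast
  then have "infinite (induced_component {x \<in> tree_V k. f x = f []} (tree_E k) [])"
    by (rule infinite_induced_component_tree_root)
  with dist_clustered_coloring_finite_component[OF assms tree_V_Nil] show False by contradiction
qed

lemma tree_dist_clustered_coloring_two_le:
  assumes "0 < k" and dcc: "dist_clustered_coloring (tree_V k) (tree_E k) m n f"
  shows "2 \<le> n"
proof -
  obtain v where v: "v \<in> tree_V k" and change: "\<forall>i\<in>{1..k}. f (v @ [i]) \<noteq> f v"
    using tree_dist_clustered_coloring_color_change[OF dcc] by blast
  have "1 \<in> {1..k}" using \<open>0 < k\<close> by simp
  with v dcc have "f v \<in> {1..n}" "f (v @ [1]) \<in> {1..n}"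
    by (auto simp: dist_clustered_coloring_def)
  with change \<open>1 \<in> {1..k}\<close> show ?thesis by fastforce
qed

lemma tree_dist2_clustered_coloring_Suc_le:
  assumes dcc: "dist_clustered_coloring (tree_V k) (tree_E k) 2 n f"
  shows "k + 1 \<le> n"
proof -
  obtain v where v: "v \<in> tree_V k" and change: "\<forall>i\<in>{1..k}. f (v @ [i]) \<noteq> f v"
    using tree_dist_clustered_coloring_color_change[OF dcc] by blast
  have range: "\<forall>x\<in>tree_V k. f x \<in> {1..n}" using dcc by (simp add: dist_clustered_coloring_def)
  have "inj_on (\<lambda>i. f (v @ [i])) {1..k}"
  proof (rule inj_onI, rule ccontr)
    fix i j assume i: "i \<in> {1..k}" and j: "j \<in> {1..k}" and "i \<noteq> j"
      and same: "f (v @ [i]) = f (v @ [j])"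
    have "is_walk (tree_V k) (tree_E k) [v @ [i], v, v @ [j]]"
      using v i j by (auto simp: tree_E_def)
    then have "gdist (tree_V k) (tree_E k) (v @ [i]) (v @ [j]) \<le> enat 2"
      unfolding gdist_le_enat_iff by (intro exI[of _ "[v @ [i], v, v @ [j]]"]) simp
    with dcc v i j same
    have "v @ [j] \<in> induced_component {x \<in> tree_V k. f x = f (v @ [i])} (tree_E k) (v @ [i])"
      by (intro dist_clustered_coloring_same_component) simp_all
    moreover have "v \<notin> {x \<in> tree_V k. f x = f (v @ [i])}"
      using change i by (metis (mono_tags, lifting) mem_Collect_eq)
    ultimately obtain t where "v @ [j] = v @ i # t"
      by (blast dest: induced_component_tree_subtree[rotated])
    with \<open>i \<noteq> j\<close> show False by (cases t) auto
  qed
  moreover have "(\<lambda>i. f (v @ [i])) ` {1..k} \<subseteq> {1..n} - {f v}"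
    using change range v by (auto simp del: atLeastAtMost_iff)
  ultimately have "card {1..k} \<le> card ({1..n} - {f v})"
    by (intro card_inj_on_le) auto
  moreover have "f v \<in> {1..n}" using v range by blast
  ultimately show ?thesis by auto
qed

definition parity_coloring :: "nat list \<Rightarrow> nat" where
  "parity_coloring v = length v mod 2 + 1"

lemma parity_coloring_tree_E: "tree_E k x y \<Longrightarrow> parity_coloring x \<noteq> parity_coloring y"
  by (auto simp: tree_E_def parity_coloring_def) presburger+

lemma dist_clustered_coloring_parity:
  "dist_clustered_coloring (tree_V k) (tree_E k) 1 2 parity_coloring"
proof (rule dist_clustered_coloringI[OF symp_tree_E])
  show "\<forall>v\<in>tree_V k. parity_coloring v \<in> {1..2}" by (auto simp: parity_coloring_def)
next
  fix a b assume "gdist (tree_V k) (tree_E k) a b \<le> enat 1"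
  then show "a = b \<or> tree_E k a b" by (rule gdist_le_1D)
qed (auto dest: parity_coloring_tree_E)

lemma add_mod_cancel_less:
  fixes i j t m :: nat
  assumes "(i + t) mod m = (j + t) mod m" "i < m" "j < m"
  shows "i = j"
proof -
  have "i = j" if "i \<le> j" "(i + t) mod m = (j + t) mod m" "j < m" for i j
  proof (rule ccontr)
    assume "i \<noteq> j"
    have "m dvd j - i" using that mod_eq_dvd_iff_nat[of "i + t" "j + t" m] by simp
    moreover have "0 < j - i" using \<open>i \<le> j\<close> \<open>i \<noteq> j\<close> by simp
    ultimately have "m \<le> j - i" by (rule dvd_imp_le)
    with \<open>j < m\<close> show False by simp
  qed
  from this[of i j] this[of j i] assms show ?thesis by linarith
qed

fun sum_alternate :: "nat list \<Rightarrow> nat" where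
  "sum_alternate [] = 0"
| "sum_alternate [i] = i"
| "sum_alternate (i # j # r) = i + sum_alternate r"

lemma sum_alternate_Cons: "sum_alternate (i # r) = i + sum_alternate (tl r)"
  by (cases r) auto

definition alternating_coloring :: "nat \<Rightarrow> nat list \<Rightarrow> nat" where
  "alternating_coloring k v = sum_alternate (rev v) mod Suc k + 1"

lemma alternating_coloring_common_neighbor:
  assumes ax: "tree_E k a x" and xb: "tree_E k x b"
    and same: "alternating_coloring k a = alternating_coloring k b"
  shows "a = b"
proof -
  from ax obtain i where i: "i \<in> {1..k}" and "x = a @ [i] \<or> a = x @ [i]"
    by (auto simp: tree_E_def)
  moreover from xb obtain j where j: "j \<in> {1..k}" and "b = x @ [j] \<or> x = b @ [j]"
    by (auto simp: tree_E_def)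
  ultimately consider "x = a @ [i]" "b = x @ [j]" | "a = x @ [i]" "x = b @ [j]"
    | "a = x @ [i]" "b = x @ [j]" | "x = a @ [i]" "x = b @ [j]"
    by blast
  then show ?thesis
  proof cases
    case 1
    with same have "(j + sum_alternate (rev a)) mod Suc k = (0 + sum_alternate (rev a)) mod Suc k"
      by (simp add: alternating_coloring_def)
    from add_mod_cancel_less[OF this] j have "j = 0" by simp
    with j show ?thesis by simp
  next
    case 2
    with same have "(i + sum_alternate (rev b)) mod Suc k = (0 + sum_alternate (rev b)) mod Suc k"
      by (simp add: alternating_coloring_def)
    from add_mod_cancel_less[OF this] i have "i = 0" by simp
    with i show ?thesis by simp
  next
    case 3
    with same have "(i + sum_alternate (tl (rev x))) mod Suc k = (j + sum_alternate (tl (rev x))) mod Suc k"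
      by (simp add: alternating_coloring_def sum_alternate_Cons)
    from add_mod_cancel_less[OF this] i j have "i = j" by simp
    with 3 show ?thesis by simp
  qed simp
qed

lemma dist_clustered_coloring_alternating:
  "dist_clustered_coloring (tree_V k) (tree_E k) 2 (k + 1) (alternating_coloring k)"
proof (rule dist_clustered_coloringI[OF symp_tree_E])
  show "\<forall>v\<in>tree_V k. alternating_coloring k v \<in> {1..k + 1}"
    by (simp add: alternating_coloring_def)
next
  fix x y z assume xy: "tree_E k x y" and xz: "tree_E k x z"
    and yx: "alternating_coloring k y = alternating_coloring k x"
    and zx: "alternating_coloring k z = alternating_coloring k x"
  have yz: "alternating_coloring k y = alternating_coloring k z" using yx zx by (rule trans_sym)
  show "y = z" using sympD[OF symp_tree_E xy] xz yz by (rule alternating_coloring_common_neighbor)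
next
  fix a b assume same: "alternating_coloring k a = alternating_coloring k b"
    and "gdist (tree_V k) (tree_E k) a b \<le> enat 2"
  then consider "a = b" | "tree_E k a b" | x where "tree_E k a x" "tree_E k x b"
    by (blast dest: gdist_le_2D)
  then show "a = b \<or> tree_E k a b"
  proof cases
    case 3
    from 3 same have "a = b" by (rule alternating_coloring_common_neighbor)
    then show ?thesis ..
  qed simp_all
qed

theorem mainTheorem8:
  fixes k :: nat
  assumes "k \<ge> 2"
  shows "dist_clustered_chromatic (tree_V k) (tree_E k) 1 = 2
       \<and> dist_clustered_chromatic (tree_V k) (tree_E k) 2 = enat (k + 1)"
proof
  have "0 < k" using assms by simp
  have "dist_clustered_chromatic (tree_V k) (tree_E k) 1 = enat 2"
    using dist_clustered_coloring_parity tree_dist_clustered_coloring_two_le[OF \<open>0 < k\<close>]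
    by (rule dist_clustered_chromatic_eqI)
  then show "dist_clustered_chromatic (tree_V k) (tree_E k) 1 = 2"
    by (simp add: numeral_eq_enat)
  show "dist_clustered_chromatic (tree_V k) (tree_E k) 2 = enat (k + 1)"
    using dist_clustered_coloring_alternating tree_dist2_clustered_coloring_Suc_le
    by (rule dist_clustered_chromatic_eqI)
qed

end
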